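(* Let $(F^kx)_{m\le k\le n}$ be a defocusing orbit segment of the billiard map $F$ on $Q(\phi_*,R)$. Let $m'\le m$ and $n'\ge n$ be such that the base points $p(F^kx)$, $m'\le k\le m$, all lie on one circular boundary arc, and the base points $p(F^kx)$, $n\le k\le n'$, all lie on one circular boundary arc. Then the segment $(F^kx)_{m'\le k\le n'}$ is defocusing (with the same sign).
   Context: $Q(\phi_*,R)$ is the asymmetric lemon table, the intersection of two disks whose boundary consists of two circular arcs $\Gamma_r,\Gamma_R$; phase space points $x$ are inward unit vectors based at $p(x)\in\Gamma_r\cup\Gamma_R$ with coordinates $(\phi,\theta)$ ($\phi$ the angular position on the circle, $\theta\in(0,\pi)$ the angle from the positive tangent direction); $F$ is the billiard map. With $d(x)=\rho\sin\theta$ ($\rho$ the radius of the arc containing $p(x)$) and $\tau(x)=|p(x)p(Fx)|$, the derivative in $(\phi,\theta)$ coordinates is $$D_xF=\frac1{d(Fx)}\begin{bmatrix}\tau(x)-d(x)&\tau(x)\\ \tau(x)-d(x)-d(Fx)&\tau(x)-d(Fx)\end{bmatrix}.$$ A finite orbit segment $(F^kx)_{m\le k\le n}$ is positively (resp. negatively) defocusing if all four entries of the matrix $D_{F^mx}F^{n-m}$ (in $(\phi,\theta)$ coordinates) are positive (resp. negative); defocusing means positively or negatively defocusing. *)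

theory Defs
  imports "HOL-Analysis.Analysis"
begin

text \<open>
  A lemon table is given by two
  circles: arc index False is the arc Gamma_r, arc index True is the arc Gamma_R.
  ctr i is the centre and rad i the radius of the circle carrying arc i.
  The table Q is the intersection of the two closed disks.
\<close>

definition lemon_table :: "(bool \<Rightarrow> complex) \<Rightarrow> (bool \<Rightarrow> real) \<Rightarrow> bool" where
  "lemon_table ctr rad \<longleftrightarrow> rad False > 0 \<and> rad True > 0 \<and>
     \<bar>rad False - rad True\<bar> < cmod (ctr False - ctr True) \<and>
     cmod (ctr False - ctr True) < rad False + rad True"

definition arc :: "(bool \<Rightarrow> complex) \<Rightarrow> (bool \<Rightarrow> real) \<Rightarrow> bool \<Rightarrow> complex set" where
  "arc ctr rad i = {z. cmod (z - ctr i) = rad i \<and> cmod (z - ctr (\<not> i)) \<le> rad (\<not> i)}"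

text \<open>Phase points: (arc index, phi, theta).\<close>
type_synonym phase = "bool \<times> real \<times> real"

definition bpt :: "(bool \<Rightarrow> complex) \<Rightarrow> (bool \<Rightarrow> real) \<Rightarrow> phase \<Rightarrow> complex" where
  "bpt ctr rad x = (case x of (i, \<phi>, \<theta>) \<Rightarrow> ctr i + complex_of_real (rad i) * cis \<phi>)"

text \<open>Unit vector at angle theta from the positive (counterclockwise) tangent
  direction cis (phi + pi/2), rotated towards the inner normal.\<close>
definition dirv :: "phase \<Rightarrow> complex" where
  "dirv x = (case x of (i, \<phi>, \<theta>) \<Rightarrow> cis (\<phi> + pi / 2 + \<theta>))"

text \<open>Phase space: inward unit vectors based at non-corner boundary points,
  with phi normalised to (-pi, pi].\<close>
definition phase_space :: "(bool \<Rightarrow> complex) \<Rightarrow> (bool \<Rightarrow> real) \<Rightarrow> phase set" where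
  "phase_space ctr rad = {(i, \<phi>, \<theta>). - pi < \<phi> \<and> \<phi> \<le> pi \<and> 0 < \<theta> \<and> \<theta> < pi \<and>
      bpt ctr rad (i, \<phi>, \<theta>) \<in> arc ctr rad i \<and>
      cmod (bpt ctr rad (i, \<phi>, \<theta>) - ctr (\<not> i)) < rad (\<not> i)}"

text \<open>y is the billiard image of x: the base point of y is hit by the ray from
  p(x) in direction v(x), and v(y) is the mirror image of v(x) in the tangent
  line at p(y) (reflection across the line spanned by the unit vector u is
  z \<mapsto> u^2 * cnj z).\<close>
definition bounce :: "(bool \<Rightarrow> complex) \<Rightarrow> (bool \<Rightarrow> real) \<Rightarrow> phase \<Rightarrow> phase \<Rightarrow> bool" where
  "bounce ctr rad x y \<longleftrightarrow> x \<in> phase_space ctr rad \<and> y \<in> phase_space ctr rad \<and>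
     (\<exists>t>0. bpt ctr rad y = bpt ctr rad x + complex_of_real t * dirv x) \<and>
     dirv y = (cis (fst (snd y) + pi / 2))\<^sup>2 * cnj (dirv x)"

definition billiard_map :: "(bool \<Rightarrow> complex) \<Rightarrow> (bool \<Rightarrow> real) \<Rightarrow> phase \<Rightarrow> phase" where
  "billiard_map ctr rad x = (SOME y. bounce ctr rad x y)"

definition tau :: "(bool \<Rightarrow> complex) \<Rightarrow> (bool \<Rightarrow> real) \<Rightarrow> phase \<Rightarrow> real" where
  "tau ctr rad x = cmod (bpt ctr rad (billiard_map ctr rad x) - bpt ctr rad x)"

definition dfun :: "(bool \<Rightarrow> real) \<Rightarrow> phase \<Rightarrow> real" where
  "dfun rad x = (case x of (i, \<phi>, \<theta>) \<Rightarrow> rad i * sin \<theta>)"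

definition DF :: "(bool \<Rightarrow> complex) \<Rightarrow> (bool \<Rightarrow> real) \<Rightarrow> phase \<Rightarrow> real^2^2" where
  "DF ctr rad x =
     (let t = tau ctr rad x; d = dfun rad x; d' = dfun rad (billiard_map ctr rad x) in
      (\<chi> i j. if i = 1 then (if j = 1 then (t - d) / d' else t / d')
                     else (if j = 1 then (t - d - d') / d' else (t - d') / d')))"

fun DFpow :: "(bool \<Rightarrow> complex) \<Rightarrow> (bool \<Rightarrow> real) \<Rightarrow> phase \<Rightarrow> nat \<Rightarrow> real^2^2" where
  "DFpow ctr rad x 0 = mat 1"
| "DFpow ctr rad x (Suc n) = DF ctr rad ((billiard_map ctr rad ^^ n) x) ** DFpow ctr rad x n"

definition pos_defocusing :: "(bool \<Rightarrow> complex) \<Rightarrow> (bool \<Rightarrow> real) \<Rightarrow> phase \<Rightarrow> nat \<Rightarrow> nat \<Rightarrow> bool" where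
  "pos_defocusing ctr rad x m n \<longleftrightarrow>
     (\<forall>i j. DFpow ctr rad ((billiard_map ctr rad ^^ m) x) (n - m) $ i $ j > 0)"

definition neg_defocusing :: "(bool \<Rightarrow> complex) \<Rightarrow> (bool \<Rightarrow> real) \<Rightarrow> phase \<Rightarrow> nat \<Rightarrow> nat \<Rightarrow> bool" where
  "neg_defocusing ctr rad x m n \<longleftrightarrow>
     (\<forall>i j. DFpow ctr rad ((billiard_map ctr rad ^^ m) x) (n - m) $ i $ j < 0)"

definition defocusing :: "(bool \<Rightarrow> complex) \<Rightarrow> (bool \<Rightarrow> real) \<Rightarrow> phase \<Rightarrow> nat \<Rightarrow> nat \<Rightarrow> bool" where
  "defocusing ctr rad x m n \<longleftrightarrow> pos_defocusing ctr rad x m n \<or> neg_defocusing ctr rad x m n"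

end

theory Submission
  imports Defs
begin

text \<open>While the orbit stays on one circle of radius \<rho>, the chord of a bounce has length
  \<tau> = 2\<rho> sin \<theta> and the reflection preserves sin \<theta>, so d(x) = d(Fx) = \<tau>/2 and D_xF is the
  shear [[1,2],[0,1]]. Multiplying a matrix whose entries all have sign s, on either side, by a
  matrix with nonnegative entries and positive diagonal keeps all entries of sign s. Since
  D F^(n'-m') factors as the same-arc tail, times D F^(n-m), times the same-arc head, the
  defocusing sign survives.\<close>

lemma circle_chord_reflection:
  fixes \<rho> t \<phi> \<theta> \<psi> \<eta> :: real and c :: complex
  assumes rho: "\<rho> > 0" and t: "t > 0"
    and hit: "c + complex_of_real \<rho> * cis \<psi> =
              c + complex_of_real \<rho> * cis \<phi> + complex_of_real t * cis (\<phi> + pi/2 + \<theta>)"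
    and refl: "cis (\<psi> + pi/2 + \<eta>) = (cis (\<psi> + pi/2))\<^sup>2 * cnj (cis (\<phi> + pi/2 + \<theta>))"
  shows "t = 2 * \<rho> * sin \<theta> \<and> sin \<eta> = sin \<theta>"
proof -
  have p1: "complex_of_real \<rho> * cis \<psi> =
            cis \<phi> * (complex_of_real \<rho> + complex_of_real t * cis (pi/2 + \<theta>))"
    using hit by (simp add: cis_mult[symmetric] algebra_simps)
  have "cmod (complex_of_real \<rho> * cis \<psi>) = \<rho>" using rho by (simp add: norm_mult)
  hence "cmod (complex_of_real \<rho> + complex_of_real t * cis (pi/2 + \<theta>)) = \<rho>"
    using p1 by (simp add: norm_mult)
  hence "cmod (Complex (\<rho> - t * sin \<theta>) (t * cos \<theta>)) = \<rho>"
    by (simp add: cis.ctr cos_add sin_add Complex_eq algebra_simps)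
  hence "(\<rho> - t * sin \<theta>)^2 + (t * cos \<theta>)^2 = \<rho>^2"
    using rho by (simp add: cmod_def)
      (metis real_sqrt_pow2 sum_power2_ge_zero add_nonneg_nonneg zero_le_power2)
  moreover have "(\<rho> - t * sin \<theta>)^2 + (t * cos \<theta>)^2 =
                 \<rho>^2 - 2 * \<rho> * t * sin \<theta> + t^2 * ((sin \<theta>)^2 + (cos \<theta>)^2)"
    by (simp only: power2_eq_square algebra_simps)
  ultimately have "t * t = t * (2 * \<rho> * sin \<theta>)"
    using sin_cos_squared_add[of \<theta>] by (simp add: power2_eq_square mult.assoc)
  hence "t * (t - 2 * \<rho> * sin \<theta>) = 0"
    by (simp add: algebra_simps)
  hence chord: "t = 2 * \<rho> * sin \<theta>" using t by simp
  have "complex_of_real \<rho> * cis \<psi> =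
        complex_of_real \<rho> * (cis \<phi> * (1 + complex_of_real (2 * sin \<theta>) * cis (pi/2 + \<theta>)))"
    using p1 chord by (simp add: algebra_simps)
  hence "cis \<psi> = cis \<phi> * (1 + complex_of_real (2 * sin \<theta>) * cis (pi/2 + \<theta>))"
    using rho by (subst (asm) mult_left_cancel) auto
  also have "1 + complex_of_real (2 * sin \<theta>) * cis (pi/2 + \<theta>) = cis (2*\<theta>)"
    by (simp add: complex_eq_iff cos_add sin_add cos_double sin_double power2_eq_square)
      (smt (verit) sin_cos_squared_add power2_eq_square)
  finally have psi: "cis \<psi> = cis (\<phi> + 2*\<theta>)" by (simp add: cis_mult)
  have "cis (\<psi> + pi/2) * cis \<eta> = cis (\<psi> + pi/2) * (cis (\<psi> + pi/2) * cis (-(\<phi> + pi/2 + \<theta>)))"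
    using refl by (simp add: cis_mult power2_eq_square cis_cnj algebra_simps)
  hence "cis \<eta> = cis (\<psi> + pi/2) * cis (-(\<phi> + pi/2 + \<theta>))"
    by (metis cis_neq_zero mult_left_cancel)
  also have "\<dots> = cis \<psi> * cis (-\<phi> - \<theta>)" by (simp add: cis_mult algebra_simps)
  also have "\<dots> = cis \<theta>" using psi by (simp add: cis_mult)
  finally have "sin \<eta> = sin \<theta>" by (metis cis.sel(2))
  with chord show ?thesis by simp
qed

lemma phase_space_arc_index:
  assumes "x \<in> phase_space ctr rad" "bpt ctr rad x \<in> arc ctr rad i"
  shows "fst x = i"
proof (rule ccontr)
  assume "fst x \<noteq> i"
  moreover obtain j \<phi> \<theta> where "x = (j, \<phi>, \<theta>)" by (cases x) auto
  ultimately show False using assms by (auto simp: phase_space_def arc_def)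
qed

definition shear :: "real^2^2" where
  "shear = (\<chi> i j. if i = 1 then (if j = 1 then 1 else 2) else (if j = 1 then 0 else 1))"

lemma DF_same_arc:
  assumes b: "bounce ctr rad x (billiard_map ctr rad x)"
    and arc_x: "bpt ctr rad x \<in> arc ctr rad i"
    and arc_Fx: "bpt ctr rad (billiard_map ctr rad x) \<in> arc ctr rad i"
    and rad_pos: "rad i > 0"
  shows "DF ctr rad x = shear"
proof -
  define y where "y = billiard_map ctr rad x"
  obtain i1 \<phi> \<theta> where x: "x = (i1, \<phi>, \<theta>)" by (cases x) auto
  obtain i2 \<psi> \<eta> where y: "y = (i2, \<psi>, \<eta>)" by (cases y) auto
  have xs: "x \<in> phase_space ctr rad" and ys: "y \<in> phase_space ctr rad"
    using b by (auto simp: bounce_def y_def)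
  have i1: "i1 = i" using phase_space_arc_index[OF xs arc_x] x by simp
  have i2: "i2 = i" using phase_space_arc_index[OF ys] arc_Fx y y_def by simp
  obtain t where t: "t > 0" and hit: "bpt ctr rad y = bpt ctr rad x + complex_of_real t * dirv x"
    and refl: "dirv y = (cis (fst (snd y) + pi / 2))\<^sup>2 * cnj (dirv x)"
    using b by (auto simp: bounce_def y_def)
  have chord: "t = 2 * rad i * sin \<theta> \<and> sin \<eta> = sin \<theta>"
    by (rule circle_chord_reflection[OF rad_pos t, of "ctr i" \<psi> \<phi>])
      (use hit refl x y i1 i2 in \<open>auto simp: bpt_def dirv_def\<close>)
  have tau: "tau ctr rad x = t"
    using hit t by (simp add: tau_def y_def[symmetric] dirv_def norm_mult split: prod.splits)
  have "0 < \<theta>" "\<theta> < pi" using xs x by (auto simp: phase_space_def)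
  hence d_pos: "rad i * sin \<theta> > 0" using rad_pos by (simp add: sin_gt_zero)
  have "dfun rad x = rad i * sin \<theta>" "dfun rad y = rad i * sin \<theta>"
    using x y i1 i2 chord by (simp_all add: dfun_def)
  then show ?thesis
    unfolding DF_def Let_def y_def[symmetric] tau shear_def
    using chord d_pos by (auto simp: vec_eq_iff forall_2 field_simps)
qed

lemma DFpow_add:
  "DFpow ctr rad z (a + b) = DFpow ctr rad ((billiard_map ctr rad ^^ a) z) b ** DFpow ctr rad z a"
proof (induction b)
  case 0
  then show ?case by (simp add: matrix_mul_lid)
next
  case (Suc b)
  have "(billiard_map ctr rad ^^ (a + b)) z = (billiard_map ctr rad ^^ b) ((billiard_map ctr rad ^^ a) z)"
    by (metis add.commute funpow_add o_apply)
  with Suc show ?case by (simp add: matrix_mul_assoc)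
qed

definition entries_have_sign :: "real \<Rightarrow> real^'n^'n \<Rightarrow> bool" where
  "entries_have_sign s A \<longleftrightarrow> (\<forall>i j. 0 < s * A $ i $ j)"

lemma entries_have_sign_mult_right:
  fixes A B :: "real^'n^'n"
  assumes A: "entries_have_sign s A"
    and nonneg: "\<And>i j. 0 \<le> B $ i $ j" and diag: "\<And>j. 0 < B $ j $ j"
  shows "entries_have_sign s (A ** B)"
  unfolding entries_have_sign_def
proof (intro allI)
  fix i j
  have "0 < (\<Sum>k\<in>UNIV. s * A $ i $ k * B $ k $ j)"
  proof (rule sum_pos2[of _ j])
    show "0 < s * A $ i $ j * B $ j $ j"
      using A diag[of j] by (simp add: entries_have_sign_def)
    show "0 \<le> s * A $ i $ k * B $ k $ j" for k
      using A nonneg by (simp add: entries_have_sign_def less_imp_le)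
  qed simp_all
  then show "0 < s * (A ** B) $ i $ j"
    by (simp add: matrix_matrix_mult_def sum_distrib_left mult.assoc)
qed

lemma entries_have_sign_mult_left:
  fixes A B :: "real^'n^'n"
  assumes A: "entries_have_sign s A"
    and nonneg: "\<And>i j. 0 \<le> B $ i $ j" and diag: "\<And>i. 0 < B $ i $ i"
  shows "entries_have_sign s (B ** A)"
  unfolding entries_have_sign_def
proof (intro allI)
  fix i j
  have "0 < (\<Sum>k\<in>UNIV. B $ i $ k * (s * A $ k $ j))"
  proof (rule sum_pos2[of _ i])
    show "0 < B $ i $ i * (s * A $ i $ j)"
      using A diag[of i] by (simp add: entries_have_sign_def)
    show "0 \<le> B $ i $ k * (s * A $ k $ j)" for k
      using A nonneg by (simp add: entries_have_sign_def less_imp_le)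
  qed simp_all
  then show "0 < s * (B ** A) $ i $ j"
    by (simp add: matrix_matrix_mult_def sum_distrib_left algebra_simps)
qed

lemma entries_have_sign_shear:
  assumes "entries_have_sign s A"
  shows "entries_have_sign s (A ** shear)" "entries_have_sign s (shear ** A)"
  using entries_have_sign_mult_right[OF assms] entries_have_sign_mult_left[OF assms]
  by (auto simp: shear_def forall_2)

lemma DFpow_same_arc_preserves_sign:
  assumes rad_pos: "rad i > 0"
    and bounces: "\<forall>k<j. bounce ctr rad ((billiard_map ctr rad ^^ k) z) ((billiard_map ctr rad ^^ Suc k) z)"
    and on_arc: "\<forall>k\<le>j. bpt ctr rad ((billiard_map ctr rad ^^ k) z) \<in> arc ctr rad i"
    and A: "entries_have_sign s A"
  shows "entries_have_sign s (DFpow ctr rad z j ** A) \<and> entries_have_sign s (A ** DFpow ctr rad z j)"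
  using bounces on_arc A
proof (induction j arbitrary: A)
  case 0
  then show ?case by (simp add: matrix_mul_lid matrix_mul_rid)
next
  case (Suc j)
  have "DF ctr rad ((billiard_map ctr rad ^^ j) z) = shear"
    by (rule DF_same_arc[where i = i]) (use Suc.prems rad_pos in auto)
  then have step: "DFpow ctr rad z (Suc j) = shear ** DFpow ctr rad z j" by simp
  have "entries_have_sign s (shear ** (DFpow ctr rad z j ** A))"
    using Suc by (simp add: entries_have_sign_shear(2))
  moreover have "entries_have_sign s ((A ** shear) ** DFpow ctr rad z j)"
    using Suc entries_have_sign_shear(1)[OF Suc.prems(3)] by simp
  ultimately show ?case
    unfolding step by (simp add: matrix_mul_assoc)
qed

lemma defocusing_sign_extends:
  fixes x :: phase and m' m n n' :: nat
  assumes table: "lemon_table ctr rad"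
    and order: "m' \<le> m" "m \<le> n" "n \<le> n'"
    and orbit: "\<forall>k. m' \<le> k \<and> k < n' \<longrightarrow>
                  bounce ctr rad ((billiard_map ctr rad ^^ k) x) ((billiard_map ctr rad ^^ Suc k) x)"
    and arc_head: "\<forall>k. m' \<le> k \<and> k \<le> m \<longrightarrow> bpt ctr rad ((billiard_map ctr rad ^^ k) x) \<in> arc ctr rad i"
    and arc_tail: "\<forall>k. n \<le> k \<and> k \<le> n' \<longrightarrow> bpt ctr rad ((billiard_map ctr rad ^^ k) x) \<in> arc ctr rad j"
    and middle: "entries_have_sign s (DFpow ctr rad ((billiard_map ctr rad ^^ m) x) (n - m))"
  shows "entries_have_sign s (DFpow ctr rad ((billiard_map ctr rad ^^ m') x) (n' - m'))"
proof -
  let ?F = "billiard_map ctr rad"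
  have rad_pos: "\<And>i. rad i > 0" using table unfolding lemon_table_def by (metis (full_types))
  have shift: "(?F ^^ k) ((?F ^^ a) x) = (?F ^^ (k + a)) x" for k a
    by (simp add: funpow_add)
  have "n' - m' = (m - m') + ((n - m) + (n' - n))" using order by simp
  then have split: "DFpow ctr rad ((?F ^^ m') x) (n' - m') =
      DFpow ctr rad ((?F ^^ n) x) (n' - n) ** DFpow ctr rad ((?F ^^ m) x) (n - m) **
      DFpow ctr rad ((?F ^^ m') x) (m - m')"
    using order by (simp only: DFpow_add shift matrix_mul_assoc) (simp add: algebra_simps)
  have "entries_have_sign s (DFpow ctr rad ((?F ^^ n) x) (n' - n) ** DFpow ctr rad ((?F ^^ m) x) (n - m))"
    using DFpow_same_arc_preserves_sign[where rad = rad and i = j and z = "(?F ^^ n) x", OF rad_pos _ _ middle]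
      orbit arc_tail order by (simp add: shift)
  then show ?thesis
    unfolding split
    using DFpow_same_arc_preserves_sign[where rad = rad and i = i and z = "(?F ^^ m') x", OF rad_pos]
      orbit arc_head order by (simp add: shift)
qed

theorem mainTheorem5:
  fixes ctr :: "bool \<Rightarrow> complex" and rad :: "bool \<Rightarrow> real"
    and x :: phase and m' m n n' :: nat
  assumes table: "lemon_table ctr rad"
    and order: "m' \<le> m" "m \<le> n" "n \<le> n'"
    and orbit: "\<forall>k. m' \<le> k \<and> k < n' \<longrightarrow>
                  bounce ctr rad ((billiard_map ctr rad ^^ k) x) ((billiard_map ctr rad ^^ Suc k) x)"
    and defoc: "defocusing ctr rad x m n"
    and arc1: "\<exists>i. \<forall>k. m' \<le> k \<and> k \<le> m \<longrightarrow>
                  bpt ctr rad ((billiard_map ctr rad ^^ k) x) \<in> arc ctr rad i"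
    and arc2: "\<exists>i. \<forall>k. n \<le> k \<and> k \<le> n' \<longrightarrow>
                  bpt ctr rad ((billiard_map ctr rad ^^ k) x) \<in> arc ctr rad i"
  shows "defocusing ctr rad x m' n' \<and>
         (pos_defocusing ctr rad x m n \<longrightarrow> pos_defocusing ctr rad x m' n') \<and>
         (neg_defocusing ctr rad x m n \<longrightarrow> neg_defocusing ctr rad x m' n')"
proof -
  obtain i j where
    "\<forall>k. m' \<le> k \<and> k \<le> m \<longrightarrow> bpt ctr rad ((billiard_map ctr rad ^^ k) x) \<in> arc ctr rad i"
    "\<forall>k. n \<le> k \<and> k \<le> n' \<longrightarrow> bpt ctr rad ((billiard_map ctr rad ^^ k) x) \<in> arc ctr rad j"
    using arc1 arc2 by blast
  note extends = defocusing_sign_extends[OF table order orbit this]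
  have pos: "pos_defocusing ctr rad x a b \<longleftrightarrow>
      entries_have_sign 1 (DFpow ctr rad ((billiard_map ctr rad ^^ a) x) (b - a))" for a b
    by (simp add: entries_have_sign_def pos_defocusing_def)
  have neg: "neg_defocusing ctr rad x a b \<longleftrightarrow>
      entries_have_sign (-1) (DFpow ctr rad ((billiard_map ctr rad ^^ a) x) (b - a))" for a b
    by (simp add: entries_have_sign_def neg_defocusing_def)
  show ?thesis
    using defoc extends unfolding defocusing_def pos neg by blast
qed

end
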